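(* Let $r\in\{1,\infty\}$, $N\in\{0,2,3,\ldots\}$, and let $(G,+,p)\in\mathfrak{G}_r(N)$ be a valued group with bounded value. Let $A$ be a nonempty subset of $G$ and $f\in E_r(A)$. If $N>2$, assume that $$\Bigl|p\Bigl(\sum_{k=1}^N a_k\Bigr)-f(a_N)\Bigr|\leqslant\sum_{k=1}^{N-1}f(a_k)\quad\text{for all }a_1,\ldots,a_N\in A.$$ Then there is a valued group $(\tilde G,+,\tilde p)\in\mathfrak{G}_r(N)$ with bounded value enlarging $(G,+,p)$ such that $f$ is trivial in $\tilde G$, i.e. there is $b\in\tilde G$ with $f(a)=\tilde p(a-b)$ for all $a\in A$. If, in addition, $Q\subseteq\mathbb{R}$ satisfies: $Q\cap[0,\infty)$ is dense in $[0,\infty)$, $0\in Q$, and $(Q\cap[0,\infty))+(Q\cap[0,\infty))\subseteq Q$, and moreover $G$ is finite and $p(G)\cup f(A)\subseteq Q$, then $\tilde G$ may be taken finite with $\tilde p(\tilde G)\subseteq Q$.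
   Context: All groups are Abelian. A value on $G$ is $p\colon G\to[0,\infty)$ with $p(x)=0\iff x=0$, $p(-x)=p(x)$, $p(x+y)\leqslant p(x)+p(y)$; it induces the metric $d(x,y)=p(x-y)$. Class $\mathcal{O}_0$: $\lim_n p(na)/n=0$ for all $a$. $\mathfrak{G}_r(N)$: separable valued Abelian groups of class $\mathcal{O}_0$ with $p\leqslant r$ (vacuous if $r=\infty$) and of exponent $N$ if $N\neq0$. For $A\subseteq G$, a Katětov map on $A$ is $f\colon A\to[0,\infty)$ with $|f(x)-f(y)|\leqslant d(x,y)\leqslant f(x)+f(y)$ for all $x,y\in A$; $E_r(A)$ is the set of Katětov maps on $A$ bounded by $r$. Enlarging means $G\subseteq\tilde G$ with addition and value extended. *)

theory Defs
  imports "HOL-Analysis.Analysis" "HOL-Algebra.FiniteProduct"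
begin

text \<open>Abelian groups are HOL-Algebra commutative groups (written multiplicatively:
  the group operation is the paper's addition, the unit is 0, inv x is -x).\<close>

definition is_value :: "('a, 'b) monoid_scheme \<Rightarrow> ('a \<Rightarrow> real) \<Rightarrow> bool" where
  "is_value G p \<longleftrightarrow>
     (\<forall>x\<in>carrier G. 0 \<le> p x) \<and>
     (\<forall>x\<in>carrier G. p x = 0 \<longleftrightarrow> x = \<one>\<^bsub>G\<^esub>) \<and>
     (\<forall>x\<in>carrier G. p (inv\<^bsub>G\<^esub> x) = p x) \<and>
     (\<forall>x\<in>carrier G. \<forall>y\<in>carrier G. p (x \<otimes>\<^bsub>G\<^esub> y) \<le> p x + p y)"

definition vdist :: "('a, 'b) monoid_scheme \<Rightarrow> ('a \<Rightarrow> real) \<Rightarrow> 'a \<Rightarrow> 'a \<Rightarrow> real" where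
  "vdist G p x y = p (x \<otimes>\<^bsub>G\<^esub> inv\<^bsub>G\<^esub> y)"

definition class_O0 :: "('a, 'b) monoid_scheme \<Rightarrow> ('a \<Rightarrow> real) \<Rightarrow> bool" where
  "class_O0 G p \<longleftrightarrow> (\<forall>a\<in>carrier G. (\<lambda>n::nat. p (a [^]\<^bsub>G\<^esub> n) / real n) \<longlonglongrightarrow> 0)"

definition vseparable :: "('a, 'b) monoid_scheme \<Rightarrow> ('a \<Rightarrow> real) \<Rightarrow> bool" where
  "vseparable G p \<longleftrightarrow> (\<exists>D. countable D \<and> D \<subseteq> carrier G \<and>
     (\<forall>x\<in>carrier G. \<forall>e>0. \<exists>y\<in>D. vdist G p x y < e))"

definition in_class_G :: "ereal \<Rightarrow> nat \<Rightarrow> ('a, 'b) monoid_scheme \<Rightarrow> ('a \<Rightarrow> real) \<Rightarrow> bool" where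
  "in_class_G r N G p \<longleftrightarrow>
     comm_group G \<and> is_value G p \<and> vseparable G p \<and> class_O0 G p \<and>
     (\<forall>x\<in>carrier G. ereal (p x) \<le> r) \<and>
     (N \<noteq> 0 \<longrightarrow> (\<forall>x\<in>carrier G. x [^]\<^bsub>G\<^esub> N = \<one>\<^bsub>G\<^esub>))"

definition bounded_value :: "('a, 'b) monoid_scheme \<Rightarrow> ('a \<Rightarrow> real) \<Rightarrow> bool" where
  "bounded_value G p \<longleftrightarrow> (\<exists>M. \<forall>x\<in>carrier G. p x \<le> M)"

definition katetov_on :: "('a, 'b) monoid_scheme \<Rightarrow> ('a \<Rightarrow> real) \<Rightarrow> 'a set \<Rightarrow> ('a \<Rightarrow> real) \<Rightarrow> bool" where
  "katetov_on G p A f \<longleftrightarrow> (\<forall>x\<in>A. 0 \<le> f x) \<and>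
     (\<forall>x\<in>A. \<forall>y\<in>A. \<bar>f x - f y\<bar> \<le> vdist G p x y \<and> vdist G p x y \<le> f x + f y)"

definition E_r :: "ereal \<Rightarrow> ('a, 'b) monoid_scheme \<Rightarrow> ('a \<Rightarrow> real) \<Rightarrow> 'a set \<Rightarrow> ('a \<Rightarrow> real) \<Rightarrow> bool" where
  "E_r r G p A f \<longleftrightarrow> katetov_on G p A f \<and> (\<forall>x\<in>A. ereal (f x) \<le> r)"

text \<open>H (on the type 'a + real) enlarges G: G is identified with Inl ` carrier G,
  and the addition and value of H extend those of G.\<close>
definition enlarges :: "('a + real) monoid \<Rightarrow> (('a + real) \<Rightarrow> real) \<Rightarrow> ('a, 'b) monoid_scheme \<Rightarrow> ('a \<Rightarrow> real) \<Rightarrow> bool" where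
  "enlarges H q G p \<longleftrightarrow> Inl ` carrier G \<subseteq> carrier H \<and>
     (\<forall>x\<in>carrier G. \<forall>y\<in>carrier G. Inl x \<otimes>\<^bsub>H\<^esub> Inl y = Inl (x \<otimes>\<^bsub>G\<^esub> y)) \<and>
     (\<forall>x\<in>carrier G. q (Inl x) = p x)"

end

theory Submission
  imports Defs "HOL-Algebra.Elementary_Groups"
begin

text \<open>Adjoin a new point \<open>b\<close>, meant to satisfy \<open>p(a - b) = f a\<close> for \<open>a \<in> A\<close>, as the generator
  of a cyclic factor: on \<open>G \<times> \<int>/m\<close> (with \<open>m = N\<close>, which keeps the exponent) give \<open>g + k b\<close>
  the cheapest price, capped at a bound \<open>M\<close> of all values, at which it can be written as a point
  of \<open>G\<close> plus letters \<open>\<plusminus>(a - b)\<close> each costing \<open>f a\<close>. Letters of opposite signs cancel in pairs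
  by the Katetov inequalities, and what remains are blocks of \<open>m\<close> letters of one sign, controlled
  by the \<open>N\<close>-ary condition (for \<open>N = 2\<close> by the Katetov inequalities again). Hence this
  pseudo-value restricts to \<open>p\<close> on \<open>G\<close> and takes the value \<open>f a\<close> at \<open>a - b\<close>; its quotient by
  the null elements is the required enlargement.
  For finite \<open>G\<close> the infimum is attained by one of finitely many short words, so it stays in \<open>Q\<close>;
  if \<open>N = 0\<close> a modulus so large that every block costs more than \<open>M\<close> does the job, and if \<open>f\<close>
  vanishes somewhere then \<open>f\<close> is already trivial in \<open>G\<close>.\<close>

lemma cInf_le_add_cInf:
  fixes S T U :: "real set"
  assumes "S \<noteq> {}" "T \<noteq> {}" "bdd_below U" "\<And>s t. s \<in> S \<Longrightarrow> t \<in> T \<Longrightarrow> \<exists>u\<in>U. u \<le> s + t"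
  shows "Inf U \<le> Inf S + Inf T"
proof -
  have "Inf U - t \<le> Inf S" if t: "t \<in> T" for t
  proof (rule cInf_greatest[OF assms(1)])
    fix s assume "s \<in> S"
    then obtain u where "u \<in> U" "u \<le> s + t" using assms(4) t by blast
    then show "Inf U - t \<le> s" using cInf_lower[OF _ assms(3)] by fastforce
  qed
  then have "Inf U - Inf S \<le> Inf T"
    using assms(2) by (intro cInf_greatest) (auto simp: algebra_simps)
  then show ?thesis by simp
qed

lemma min_cInf_mem:
  fixes S :: "real set"
  assumes "S \<noteq> {}" "bdd_below S" "finite {s \<in> S. s \<le> M}"
  shows "min M (Inf S) \<in> insert M S"
proof (cases "M \<le> Inf S")
  case False
  define T where "T = {s \<in> S. s \<le> M}"
  obtain s where "s \<in> S" "s < M" using False cInf_lessD[OF assms(1)] by (meson not_le)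
  then have T: "finite T" "T \<noteq> {}" using assms(3) by (auto simp: T_def)
  then have "Min T \<in> S" "Min T \<le> M" using Min_in[OF T] by (auto simp: T_def)
  moreover have "Min T \<le> s" if "s \<in> S" for s
    using that T \<open>Min T \<le> M\<close> by (cases "s \<le> M") (auto simp: T_def)
  ultimately have "Inf S = Min T" by (intro cInf_eq_minimum)
  then show ?thesis using \<open>Min T \<in> S\<close> \<open>Min T \<le> M\<close> by simp
qed simp

lemma sum_list_in_add_closed:
  fixes Q :: "real set"
  assumes "0 \<in> Q" "\<forall>x\<in>Q \<inter> {0..}. \<forall>y\<in>Q \<inter> {0..}. x + y \<in> Q" "set xs \<subseteq> Q \<inter> {0..}"
  shows "sum_list xs \<in> Q \<inter> {0..}"
  using assms(3) by (induction xs) (use assms(1,2) in auto)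

section \<open>Quotients of pseudo-valued groups\<close>

locale pseudo_valued_group = comm_group P for P :: "'c monoid" (structure) +
  fixes q :: "'c \<Rightarrow> real"
  assumes q_nonneg: "x \<in> carrier P \<Longrightarrow> 0 \<le> q x"
    and q_inv: "x \<in> carrier P \<Longrightarrow> q (inv x) = q x"
    and q_mult: "x \<in> carrier P \<Longrightarrow> y \<in> carrier P \<Longrightarrow> q (x \<otimes> y) \<le> q x + q y"
    and q_one: "q \<one> = 0"
begin

definition null_equiv :: "'c \<Rightarrow> 'c \<Rightarrow> bool" where
  "null_equiv x y \<longleftrightarrow> q (x \<otimes> inv y) = 0"

lemma null_equiv_refl: "x \<in> carrier P \<Longrightarrow> null_equiv x x"
  by (simp add: null_equiv_def q_one)

lemma null_equiv_sym:
  assumes "x \<in> carrier P" "y \<in> carrier P" "null_equiv x y"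
  shows "null_equiv y x"
proof -
  have "y \<otimes> inv x = inv (x \<otimes> inv y)" using assms by (simp add: inv_mult m_comm)
  then show ?thesis using assms q_inv[of "x \<otimes> inv y"] by (simp add: null_equiv_def)
qed

lemma null_equiv_trans:
  assumes x: "x \<in> carrier P" and y: "y \<in> carrier P" and z: "z \<in> carrier P"
    and "null_equiv x y" "null_equiv y z"
  shows "null_equiv x z"
proof -
  have "x \<otimes> inv z = (x \<otimes> inv y) \<otimes> (y \<otimes> inv z)"
    using x y z by (metis inv_closed l_inv l_one m_assoc m_closed)
  then have "q (x \<otimes> inv z) \<le> 0"
    using assms q_mult[of "x \<otimes> inv y" "y \<otimes> inv z"] by (simp add: null_equiv_def)
  then show ?thesis using x z q_nonneg[of "x \<otimes> inv z"] by (simp add: null_equiv_def)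
qed

lemma null_equiv_mult:
  assumes x: "x \<in> carrier P" "x' \<in> carrier P" and y: "y \<in> carrier P" "y' \<in> carrier P"
    and "null_equiv x x'" "null_equiv y y'"
  shows "null_equiv (x \<otimes> y) (x' \<otimes> y')"
proof -
  have "(x \<otimes> y) \<otimes> inv (x' \<otimes> y') = (x \<otimes> inv x') \<otimes> (y \<otimes> inv y')"
    using x y by (simp add: inv_mult m_ac)
  then have "q ((x \<otimes> y) \<otimes> inv (x' \<otimes> y')) \<le> 0"
    using assms q_mult[of "x \<otimes> inv x'" "y \<otimes> inv y'"] by (simp add: null_equiv_def)
  then show ?thesis using x y q_nonneg[of "(x \<otimes> y) \<otimes> inv (x' \<otimes> y')"] by (simp add: null_equiv_def)
qed

lemma null_equiv_imp_q_eq: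
  assumes x: "x \<in> carrier P" and y: "y \<in> carrier P" and "null_equiv x y"
  shows "q x = q y"
proof -
  have "q u \<le> q v" if "u \<in> carrier P" "v \<in> carrier P" "null_equiv u v" for u v
  proof -
    have "u = (u \<otimes> inv v) \<otimes> v" using that by (simp add: m_assoc)
    then show "q u \<le> q v" using that q_mult[of "u \<otimes> inv v" v] by (simp add: null_equiv_def)
  qed
  then show ?thesis using assms null_equiv_sym by (meson order_antisym)
qed

end

locale pseudo_value_quotient = pseudo_valued_group P q for P :: "'c monoid" (structure) and q +
  fixes enc :: "'c \<Rightarrow> 'd"
  assumes enc_eq_iff: "x \<in> carrier P \<Longrightarrow> y \<in> carrier P \<Longrightarrow> enc x = enc y \<longleftrightarrow> null_equiv x y"
begin

definition rep :: "'d \<Rightarrow> 'c" where "rep u = (SOME x. x \<in> carrier P \<and> enc x = u)"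

definition quot :: "'d monoid" where
  "quot = \<lparr>carrier = enc ` carrier P, mult = (\<lambda>u v. enc (rep u \<otimes> rep v)), one = enc \<one>\<rparr>"

definition quot_value :: "'d \<Rightarrow> real" where "quot_value u = q (rep u)"

lemma carrier_quot: "carrier quot = enc ` carrier P"
  by (simp add: quot_def)

lemma one_quot: "\<one>\<^bsub>quot\<^esub> = enc \<one>"
  by (simp add: quot_def)

lemma rep_enc:
  assumes "x \<in> carrier P" shows "rep (enc x) \<in> carrier P" "null_equiv (rep (enc x)) x"
proof -
  have "rep (enc x) \<in> carrier P \<and> enc (rep (enc x)) = enc x"
    unfolding rep_def by (rule someI[of _ x]) (use assms in simp)
  then show "rep (enc x) \<in> carrier P" "null_equiv (rep (enc x)) x"
    using assms enc_eq_iff by auto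
qed

lemma enc_mult: "x \<in> carrier P \<Longrightarrow> y \<in> carrier P \<Longrightarrow> enc x \<otimes>\<^bsub>quot\<^esub> enc y = enc (x \<otimes> y)"
  using rep_enc by (simp add: quot_def enc_eq_iff null_equiv_mult)

lemma quot_value_enc: "x \<in> carrier P \<Longrightarrow> quot_value (enc x) = q x"
  using rep_enc null_equiv_imp_q_eq by (simp add: quot_value_def)

lemma comm_group_quot: "comm_group quot"
proof (rule comm_groupI)
  fix u assume "u \<in> carrier quot"
  then obtain x where "x \<in> carrier P" "u = enc x" by (auto simp: carrier_quot)
  then show "\<exists>v\<in>carrier quot. v \<otimes>\<^bsub>quot\<^esub> u = \<one>\<^bsub>quot\<^esub>"
    by (intro bexI[of _ "enc (inv x)"]) (auto simp: carrier_quot enc_mult one_quot)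
qed (auto simp: carrier_quot enc_mult one_quot m_ac)

lemma inv_enc: "x \<in> carrier P \<Longrightarrow> inv\<^bsub>quot\<^esub> (enc x) = enc (inv x)"
  by (rule group.inv_equality[OF comm_group.axioms(2)[OF comm_group_quot]])
    (auto simp: carrier_quot enc_mult one_quot)

lemma pow_enc: "x \<in> carrier P \<Longrightarrow> enc x [^]\<^bsub>quot\<^esub> (n::nat) = enc (x [^] n)"
  by (induction n) (simp_all add: one_quot enc_mult)

lemma is_value_quot: "is_value quot quot_value"
  unfolding is_value_def
proof (intro conjI ballI)
  fix u v assume "u \<in> carrier quot" "v \<in> carrier quot"
  then obtain x y where "x \<in> carrier P" "u = enc x" "y \<in> carrier P" "v = enc y"
    by (auto simp: carrier_quot)
  then show "quot_value (u \<otimes>\<^bsub>quot\<^esub> v) \<le> quot_value u + quot_value v"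
    by (simp add: quot_value_enc enc_mult q_mult)
next
  fix u assume "u \<in> carrier quot"
  then obtain x where x: "x \<in> carrier P" "u = enc x" by (auto simp: carrier_quot)
  then show "0 \<le> quot_value u" "quot_value (inv\<^bsub>quot\<^esub> u) = quot_value u"
    by (simp_all add: quot_value_enc inv_enc q_nonneg q_inv)
  show "quot_value u = 0 \<longleftrightarrow> u = \<one>\<^bsub>quot\<^esub>"
    using x enc_eq_iff[of x \<one>] by (simp add: quot_value_enc one_quot null_equiv_def)
qed

end

locale valued_group = comm_group G for G :: "'a monoid" (structure) +
  fixes p :: "'a \<Rightarrow> real"
  assumes is_value: "is_value G p"
begin

lemma p_nonneg: "x \<in> carrier G \<Longrightarrow> 0 \<le> p x"
  using is_value unfolding is_value_def by auto

lemma p_eq_0_iff: "x \<in> carrier G \<Longrightarrow> p x = 0 \<longleftrightarrow> x = \<one>"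
  using is_value unfolding is_value_def by auto

lemma p_inv: "x \<in> carrier G \<Longrightarrow> p (inv x) = p x"
  using is_value unfolding is_value_def by auto

lemma p_mult: "x \<in> carrier G \<Longrightarrow> y \<in> carrier G \<Longrightarrow> p (x \<otimes> y) \<le> p x + p y"
  using is_value unfolding is_value_def by auto

lemma p_one [simp]: "p \<one> = 0"
  using p_eq_0_iff by simp

lemma p_div_commute: "x \<in> carrier G \<Longrightarrow> y \<in> carrier G \<Longrightarrow> p (x \<otimes> inv y) = p (y \<otimes> inv x)"
  by (metis inv_closed inv_inv inv_mult_group m_closed p_inv)

lemma p_le_p_mult: "x \<in> carrier G \<Longrightarrow> y \<in> carrier G \<Longrightarrow> p x \<le> p (x \<otimes> y) + p y"
  using p_mult[of "x \<otimes> y" "inv y"] p_inv[of y] by (simp add: m_assoc)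

end

lemma bounded_value_imp_class_O0:
  assumes "monoid H" and "\<And>x. x \<in> carrier H \<Longrightarrow> 0 \<le> q x" and "bounded_value H q"
  shows "class_O0 H q"
  unfolding class_O0_def
proof
  fix a assume a: "a \<in> carrier H"
  obtain M where M: "\<And>x. x \<in> carrier H \<Longrightarrow> q x \<le> M"
    using assms(3) unfolding bounded_value_def by blast
  have pow: "a [^]\<^bsub>H\<^esub> (n::nat) \<in> carrier H" for n
    using a by (simp add: monoid.nat_pow_closed[OF assms(1)])
  show "(\<lambda>n. q (a [^]\<^bsub>H\<^esub> n) / real n) \<longlonglongrightarrow> 0"
  proof (rule tendsto_sandwich[OF _ _ tendsto_const lim_const_over_n[of M]])
    show "\<forall>\<^sub>F n in sequentially. 0 \<le> q (a [^]\<^bsub>H\<^esub> n) / real n"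
      using pow assms(2) by simp
    show "\<forall>\<^sub>F n in sequentially. q (a [^]\<^bsub>H\<^esub> n) / real n \<le> M / real n"
      using pow M by (simp add: divide_right_mono)
  qed
qed

section \<open>Enlargements of \<open>G \<times> \<int>/m\<close>\<close>

abbreviation zmod_prod :: "'a monoid \<Rightarrow> nat \<Rightarrow> ('a \<times> int) monoid" where
  "zmod_prod G m \<equiv> G \<times>\<times> integer_mod_group m"

lemma comm_group_zmod_prod:
  assumes "comm_group G" shows "comm_group (zmod_prod G m)"
proof -
  interpret comm_group G by fact
  show ?thesis
    by (intro group.group_comm_groupI DirProd_group) (auto simp: is_group m_comm add.commute)
qed

lemma pow_zmod_prod:
  "monoid G \<Longrightarrow> g \<in> carrier G \<Longrightarrow>
   (g, k) [^]\<^bsub>zmod_prod G m\<^esub> (n::nat) = (g [^]\<^bsub>G\<^esub> n, (int n * k) mod int m)"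
  by (induction n) (simp_all add: mod_add_left_eq mod_add_right_eq distrib_right add.commute)

lemma mod_in_carrier_integer_mod_group: "k mod int m \<in> carrier (integer_mod_group m)"
  by (simp add: carrier_integer_mod_group)

locale zmod_enlargement = valued_group G p for G (structure) and p +
  fixes m :: nat and q :: "'a \<times> int \<Rightarrow> real" and code :: "'a \<times> int \<Rightarrow> real"
  assumes pseudo_value: "pseudo_valued_group (zmod_prod G m) q"
    and q_base: "g \<in> carrier G \<Longrightarrow> q (g, 0) = p g"
    and code_inj: "inj_on code (carrier (zmod_prod G m))"

sublocale zmod_enlargement \<subseteq> P: pseudo_valued_group "zmod_prod G m" q
  by (rule pseudo_value)

context zmod_enlargement
begin

abbreviation (input) PP where "PP \<equiv> zmod_prod G m"

definition enc :: "'a \<times> int \<Rightarrow> 'a + real" where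
  "enc x = (if \<exists>g\<in>carrier G. P.null_equiv x (g, 0)
     then Inl (SOME g. g \<in> carrier G \<and> P.null_equiv x (g, 0))
     else Inr (code (SOME y. y \<in> carrier PP \<and> P.null_equiv x y)))"

lemma base_in_carrier: "g \<in> carrier G \<Longrightarrow> (g, 0) \<in> carrier PP"
  by simp

lemma null_equiv_base_iff:
  assumes "g \<in> carrier G" "h \<in> carrier G"
  shows "P.null_equiv (g, 0) (h, 0) \<longleftrightarrow> g = h"
proof -
  have "(g, 0) \<otimes>\<^bsub>PP\<^esub> inv\<^bsub>PP\<^esub> (h, 0) = (g \<otimes> inv h, 0)"
    using assms by simp
  moreover have "g \<otimes> inv h = \<one> \<longleftrightarrow> g = h"
    using assms by (metis inv_closed inv_inv r_inv m_comm inv_equality)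
  ultimately show ?thesis
    using assms by (simp add: P.null_equiv_def q_base p_eq_0_iff)
qed

lemma enc_respects_null_equiv:
  assumes x: "x \<in> carrier PP" and y: "y \<in> carrier PP" and "P.null_equiv x y"
  shows "enc x = enc y"
proof -
  have same: "P.null_equiv x z \<longleftrightarrow> P.null_equiv y z" if "z \<in> carrier PP" for z
    using assms that P.null_equiv_sym P.null_equiv_trans by blast
  have "(\<lambda>g. g \<in> carrier G \<and> P.null_equiv x (g, 0)) = (\<lambda>g. g \<in> carrier G \<and> P.null_equiv y (g, 0))"
    using same[OF base_in_carrier] by blast
  moreover have "(\<lambda>z. z \<in> carrier PP \<and> P.null_equiv x z) = (\<lambda>z. z \<in> carrier PP \<and> P.null_equiv y z)"
    using same by blast
  ultimately show ?thesis unfolding enc_def by (metis (no_types, lifting))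
qed

lemma enc_InlD:
  assumes "enc x = Inl g" shows "g \<in> carrier G" "P.null_equiv x (g, 0)"
proof -
  have ex: "\<exists>g\<in>carrier G. P.null_equiv x (g, 0)" and
    g: "g = (SOME g. g \<in> carrier G \<and> P.null_equiv x (g, 0))"
    using assms unfolding enc_def by (auto split: if_splits)
  then show "g \<in> carrier G" "P.null_equiv x (g, 0)"
    using someI_ex[of "\<lambda>g. g \<in> carrier G \<and> P.null_equiv x (g, 0)"] by auto
qed

lemma enc_InrD:
  assumes x: "x \<in> carrier PP" and "enc x = Inr c"
  obtains z where "z \<in> carrier PP" "P.null_equiv x z" "c = code z"
proof -
  have c: "c = code (SOME z. z \<in> carrier PP \<and> P.null_equiv x z)"
    using assms(2) unfolding enc_def by (auto split: if_splits)
  have "\<exists>z. z \<in> carrier PP \<and> P.null_equiv x z"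
    using x P.null_equiv_refl by blast
  then show ?thesis using that c someI_ex[of "\<lambda>z. z \<in> carrier PP \<and> P.null_equiv x z"] by blast
qed

lemma enc_eq_iff:
  assumes x: "x \<in> carrier PP" and y: "y \<in> carrier PP"
  shows "enc x = enc y \<longleftrightarrow> P.null_equiv x y"
proof
  assume e: "enc x = enc y"
  show "P.null_equiv x y"
  proof (cases "enc x")
    case (Inl g)
    then have "g \<in> carrier G" "P.null_equiv x (g, 0)" "P.null_equiv y (g, 0)"
      using e enc_InlD by metis+
    then show ?thesis using x y P.null_equiv_sym P.null_equiv_trans base_in_carrier by meson
  next
    case (Inr c)
    obtain z where z: "z \<in> carrier PP" "P.null_equiv x z" "c = code z"
      using enc_InrD[OF x Inr] .
    obtain z' where z': "z' \<in> carrier PP" "P.null_equiv y z'" "c = code z'"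
      using enc_InrD[OF y] Inr e by metis
    have "z = z'" using z z' code_inj by (auto dest: inj_onD)
    then show ?thesis using x y z z' P.null_equiv_sym P.null_equiv_trans by meson
  qed
qed (rule enc_respects_null_equiv[OF x y])

lemma enc_base: "g \<in> carrier G \<Longrightarrow> enc (g, 0) = Inl g"
  using enc_InlD[of "(g, 0)"] null_equiv_base_iff
  by (metis (no_types, lifting) P.null_equiv_refl base_in_carrier enc_def)

end

sublocale zmod_enlargement \<subseteq> Q: pseudo_value_quotient "zmod_prod G m" q enc
  by unfold_locales (rule enc_eq_iff)

context zmod_enlargement
begin

lemma enlarges_quot: "enlarges Q.quot Q.quot_value G p"
proof -
  have "Inl g \<in> carrier Q.quot" if "g \<in> carrier G" for g
    using enc_base[OF that] base_in_carrier[OF that] by (metis Q.carrier_quot imageI)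
  moreover have "Inl g \<otimes>\<^bsub>Q.quot\<^esub> Inl h = Inl (g \<otimes> h)" if "g \<in> carrier G" "h \<in> carrier G" for g h
    using that Q.enc_mult[of "(g, 0)" "(h, 0)"] by (simp add: enc_base)
  moreover have "Q.quot_value (Inl g) = p g" if "g \<in> carrier G" for g
    using that Q.quot_value_enc[of "(g, 0)"] by (simp add: enc_base q_base)
  ultimately show ?thesis unfolding enlarges_def by blast
qed

lemma vseparable_quot:
  assumes "vseparable G p" shows "vseparable Q.quot Q.quot_value"
proof -
  obtain D where D: "countable D" "D \<subseteq> carrier G"
    "\<And>x e. x \<in> carrier G \<Longrightarrow> e > 0 \<Longrightarrow> \<exists>y\<in>D. vdist G p x y < e"
    using assms unfolding vseparable_def by blast
  have dist: "vdist Q.quot Q.quot_value (enc (g, k)) (enc (d, k)) = vdist G p g d"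
    if "g \<in> carrier G" "d \<in> carrier G" "k \<in> carrier (integer_mod_group m)" for g d k
    using that by (simp add: vdist_def Q.inv_enc Q.enc_mult Q.quot_value_enc q_base mod_add_right_eq
        mod_in_carrier_integer_mod_group)
  have "\<exists>y\<in>enc ` (D \<times> carrier (integer_mod_group m)). vdist Q.quot Q.quot_value u y < e"
    if "u \<in> carrier Q.quot" "e > 0" for u e
  proof -
    obtain g k where gk: "g \<in> carrier G" "k \<in> carrier (integer_mod_group m)" "u = enc (g, k)"
      using \<open>u \<in> carrier Q.quot\<close> by (auto simp: Q.carrier_quot)
    obtain d where "d \<in> D" "vdist G p g d < e" using D(3)[OF gk(1) \<open>e > 0\<close>] by blast
    then show ?thesis using gk dist[of g d k] D(2) by force
  qed
  moreover have "countable (enc ` (D \<times> carrier (integer_mod_group m)))"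
    by (intro countable_image countable_SIGMA D(1) countableI_type)
  moreover have "enc ` (D \<times> carrier (integer_mod_group m)) \<subseteq> carrier Q.quot"
    using D(2) by (auto simp: Q.carrier_quot)
  ultimately show ?thesis unfolding vseparable_def by blast
qed

lemma exponent_quot:
  assumes "\<forall>x\<in>carrier G. x [^] N = \<one>" and "m dvd N"
  shows "\<forall>u\<in>carrier Q.quot. u [^]\<^bsub>Q.quot\<^esub> N = \<one>\<^bsub>Q.quot\<^esub>"
proof
  fix u assume "u \<in> carrier Q.quot"
  then obtain g k where "g \<in> carrier G" "u = enc (g, k)" "k \<in> carrier (integer_mod_group m)"
    by (auto simp: Q.carrier_quot)
  moreover have "(int N * k) mod int m = 0" using \<open>m dvd N\<close> by simp
  ultimately show "u [^]\<^bsub>Q.quot\<^esub> N = \<one>\<^bsub>Q.quot\<^esub>"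
    using assms by (simp add: Q.pow_enc pow_zmod_prod Q.one_quot)
qed

lemma quot_value_trivializes:
  assumes "a \<in> carrier G" "y \<in> carrier PP"
  shows "Q.quot_value (Inl a \<otimes>\<^bsub>Q.quot\<^esub> inv\<^bsub>Q.quot\<^esub> enc y) = q ((a, 0) \<otimes>\<^bsub>PP\<^esub> inv\<^bsub>PP\<^esub> y)"
proof -
  have "(a, 0) \<otimes>\<^bsub>PP\<^esub> inv\<^bsub>PP\<^esub> y \<in> carrier PP"
    using assms by (intro P.m_closed P.inv_closed base_in_carrier)
  then show ?thesis
    using assms Q.enc_mult[OF base_in_carrier[OF assms(1)] P.inv_closed[OF assms(2)]]
    by (simp add: enc_base[symmetric] Q.inv_enc Q.quot_value_enc del: inv_DirProd mult_DirProd)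
qed

end

lemma (in valued_group) vseparable_imp_inj_nat_sets:
  assumes "vseparable G p"
  obtains \<iota> :: "'a \<Rightarrow> nat set" where "inj_on \<iota> (carrier G)"
proof -
  obtain D where D: "countable D" "D \<subseteq> carrier G"
    "\<And>x e. x \<in> carrier G \<Longrightarrow> e > 0 \<Longrightarrow> \<exists>y\<in>D. p (x \<otimes> inv y) < e"
    using assms unfolding vseparable_def vdist_def by blast
  define \<iota> where "\<iota> x = {prod_encode (i, j) | i j. p (x \<otimes> inv (from_nat_into D i)) < 1 / real (Suc j)}"
    for x
  have "x = y" if x: "x \<in> carrier G" and y: "y \<in> carrier G" and eq: "\<iota> x = \<iota> y" for x y
  proof (rule ccontr)
    assume "x \<noteq> y"
    then have e: "0 < p (x \<otimes> inv y)"
      using x y p_nonneg p_eq_0_iff by (metis inv_closed inv_comm inv_equality less_eq_real_def m_closed r_inv)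
    define j where "j = nat \<lceil>2 / p (x \<otimes> inv y)\<rceil>"
    have "2 / p (x \<otimes> inv y) < real (Suc j)" unfolding j_def by linarith
    then have j: "2 / real (Suc j) < p (x \<otimes> inv y)" using e by (simp add: field_simps)
    obtain d where d: "d \<in> D" "p (x \<otimes> inv d) < 1 / real (Suc j)"
      using D(3)[OF x, of "1 / real (Suc j)"] by auto
    obtain i where i: "from_nat_into D i = d" using from_nat_into_surj[OF D(1) d(1)] by blast
    have "prod_encode (i, j) \<in> \<iota> y" using eq d i unfolding \<iota>_def by blast
    then have dy: "p (y \<otimes> inv d) < 1 / real (Suc j)"
      using i unfolding \<iota>_def by (auto simp: prod_encode_eq)
    have dG: "d \<in> carrier G" using d D(2) by auto
    have "x \<otimes> inv y = (x \<otimes> inv d) \<otimes> (d \<otimes> inv y)"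
      using x y dG by (metis inv_closed l_inv l_one m_assoc m_closed)
    then have "p (x \<otimes> inv y) \<le> p (x \<otimes> inv d) + p (d \<otimes> inv y)"
      using x y dG p_mult by simp
    also have "p (d \<otimes> inv y) = p (y \<otimes> inv d)" using dG y by (rule p_div_commute)
    finally show False using d(2) dy j by simp
  qed
  then show ?thesis using that[of \<iota>] inj_onI[of "carrier G" \<iota>] by blast
qed

lemma inj_real_code:
  fixes \<iota> :: "'a \<Rightarrow> nat set"
  assumes "inj_on \<iota> S"
  obtains code :: "'a \<times> int \<Rightarrow> real" where "inj_on code (S \<times> UNIV)"
proof -
  obtain \<rho> :: "nat set \<Rightarrow> real" where \<rho>: "bij \<rho>"
    using nat_sets_eqpoll_reals unfolding eqpoll_def by blast
  define frac where "frac x = arctan (\<rho> (\<iota> x)) / pi + 1/2" for x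
  have frac: "0 < frac x" "frac x < 1" for x
    using arctan_bounded[of "\<rho> (\<iota> x)"] pi_gt_zero by (auto simp: frac_def field_simps)
  define code where "code x = real_of_int (snd x) + frac (fst x)" for x
  \<comment> \<open>the integer part of the code recovers the second coordinate, the fractional part the first\<close>
  have "x = y" if "x \<in> S \<times> UNIV" "y \<in> S \<times> UNIV" "code x = code y" for x y
  proof -
    have "\<lfloor>code z\<rfloor> = snd z" for z
      unfolding code_def using frac[of "fst z"] by (intro floor_unique) auto
    then have "snd x = snd y" using that(3) by metis
    then have "arctan (\<rho> (\<iota> (fst x))) = arctan (\<rho> (\<iota> (fst y)))"
      using that(3) pi_gt_zero by (simp add: code_def frac_def field_simps)
    then have "\<iota> (fst x) = \<iota> (fst y)" using \<rho> by (simp add: arctan_eq_iff bij_def inj_eq)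
    then show "x = y"
      using \<open>snd x = snd y\<close> assms that(1,2) by (auto dest: inj_onD simp: prod_eq_iff)
  qed
  then show ?thesis using that[of code] inj_onI[of "S \<times> UNIV" code] by blast
qed

lemma enlargement_from_pseudo_value:
  fixes G :: "'a monoid" and q :: "'a \<times> int \<Rightarrow> real"
  assumes vg: "valued_group G p" and pseudo: "pseudo_valued_group (zmod_prod G m) q"
    and q_base: "\<And>g. g \<in> carrier G \<Longrightarrow> q (g, 0) = p g"
    and q_le: "\<And>x. x \<in> carrier (zmod_prod G m) \<Longrightarrow> q x \<le> M" and Mr: "ereal M \<le> r"
    and sep: "vseparable G p"
    and exponent: "N \<noteq> 0 \<Longrightarrow> (\<forall>x\<in>carrier G. x [^]\<^bsub>G\<^esub> N = \<one>\<^bsub>G\<^esub>) \<and> m dvd N"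
    and y: "y \<in> carrier (zmod_prod G m)"
  obtains H :: "('a + real) monoid" and q'
  where "in_class_G r N H q'" "bounded_value H q'" "enlarges H q' G p"
    "\<exists>b\<in>carrier H. \<forall>a\<in>carrier G. q' (Inl a \<otimes>\<^bsub>H\<^esub> inv\<^bsub>H\<^esub> b) = q ((a, 0) \<otimes>\<^bsub>zmod_prod G m\<^esub> inv\<^bsub>zmod_prod G m\<^esub> y)"
    "finite (carrier G) \<Longrightarrow> 0 < m \<Longrightarrow> finite (carrier H)"
    "q' ` carrier H \<subseteq> q ` carrier (zmod_prod G m)"
proof -
  interpret valued_group G p by (rule vg)
  obtain \<iota> :: "'a \<Rightarrow> nat set" where "inj_on \<iota> (carrier G)"
    using vseparable_imp_inj_nat_sets[OF sep] .
  then obtain code :: "'a \<times> int \<Rightarrow> real" where "inj_on code (carrier G \<times> UNIV)"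
    by (rule inj_real_code)
  then have "inj_on code (carrier (zmod_prod G m))" by (rule inj_on_subset) auto
  then interpret E: zmod_enlargement G p m q code
    using vg pseudo q_base by (intro zmod_enlargement.intro zmod_enlargement_axioms.intro)
  interpret H: comm_group E.Q.quot by (rule E.Q.comm_group_quot)
  have bounded: "bounded_value E.Q.quot E.Q.quot_value"
    unfolding bounded_value_def
    by (rule exI[of _ M]) (auto simp: E.Q.carrier_quot E.Q.quot_value_enc q_le)
  have "in_class_G r N E.Q.quot E.Q.quot_value"
    unfolding in_class_G_def
  proof (intro conjI impI)
    show "\<forall>x\<in>carrier E.Q.quot. ereal (E.Q.quot_value x) \<le> r"
      using Mr q_le by (auto simp: E.Q.carrier_quot E.Q.quot_value_enc intro: order_trans[of _ "ereal M"])
    show "class_O0 E.Q.quot E.Q.quot_value"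
      using bounded by (intro bounded_value_imp_class_O0 H.is_monoid) (auto simp: E.Q.carrier_quot
          E.Q.quot_value_enc E.P.q_nonneg)
  qed (use E.Q.comm_group_quot E.Q.is_value_quot E.vseparable_quot[OF sep]
      E.exponent_quot exponent in auto)
  moreover have "\<forall>a\<in>carrier G. E.Q.quot_value (Inl a \<otimes>\<^bsub>E.Q.quot\<^esub> inv\<^bsub>E.Q.quot\<^esub> E.enc y)
      = q ((a, 0) \<otimes>\<^bsub>zmod_prod G m\<^esub> inv\<^bsub>zmod_prod G m\<^esub> y)"
    using E.quot_value_trivializes y by blast
  moreover have "finite (carrier E.Q.quot)" if "finite (carrier G)" "0 < m"
    using that by (simp add: E.Q.carrier_quot carrier_integer_mod_group)
  moreover have "E.Q.quot_value ` carrier E.Q.quot \<subseteq> q ` carrier (zmod_prod G m)"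
    by (auto simp: E.Q.carrier_quot E.Q.quot_value_enc simp del: carrier_DirProd)
  ultimately show ?thesis
    using that bounded E.enlarges_quot y by (metis E.Q.carrier_quot imageI)
qed

section \<open>Words in the letters \<open>a - b\<close>\<close>

locale katetov_data = valued_group G p for G (structure) and p +
  fixes A :: "'a set" and f :: "'a \<Rightarrow> real" and M :: real
  assumes A_subset: "A \<subseteq> carrier G" and A_nonempty: "A \<noteq> {}"
    and f_nonneg: "a \<in> A \<Longrightarrow> 0 \<le> f a"
    and katetov_upper: "a \<in> A \<Longrightarrow> b \<in> A \<Longrightarrow> f a \<le> p (a \<otimes> inv b) + f b"
    and katetov_lower: "a \<in> A \<Longrightarrow> b \<in> A \<Longrightarrow> p (a \<otimes> inv b) \<le> f a + f b"
    and f_le_M: "a \<in> A \<Longrightarrow> f a \<le> M"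
    and p_le_M: "x \<in> carrier G \<Longrightarrow> p x \<le> M"
begin

definition lprod :: "'a list \<Rightarrow> 'a" where "lprod u = foldr (\<otimes>) u \<one>"

abbreviation weight :: "'a list \<Rightarrow> real" where "weight u \<equiv> sum_list (map f u)"

lemma lprod_Nil [simp]: "lprod [] = \<one>"
  by (simp add: lprod_def)

lemma lprod_Cons [simp]: "lprod (x # u) = x \<otimes> lprod u"
  by (simp add: lprod_def)

lemma lprod_closed: "set u \<subseteq> A \<Longrightarrow> lprod u \<in> carrier G"
  using A_subset by (induction u) auto

lemma lprod_append: "set u \<subseteq> A \<Longrightarrow> set v \<subseteq> A \<Longrightarrow> lprod (u @ v) = lprod u \<otimes> lprod v"
  using A_subset by (induction u) (auto simp: m_assoc lprod_closed)

lemma weight_nonneg: "set u \<subseteq> A \<Longrightarrow> 0 \<le> weight u"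
  using f_nonneg by (induction u) (auto intro: add_nonneg_nonneg)

lemma weight_ge_length: "(\<And>a. a \<in> A \<Longrightarrow> d \<le> f a) \<Longrightarrow> set u \<subseteq> A \<Longrightarrow> real (length u) * d \<le> weight u"
  by (induction u) (auto simp: algebra_simps intro: add_mono)

lemma M_nonneg: "0 \<le> M"
  using p_le_M[of \<one>] by simp

end

text \<open>Think of the pair \<open>(a, -1)\<close> in \<open>G \<times> \<int>/m\<close> as \<open>a - b\<close> for a new point \<open>b\<close>
  with \<open>m b = 0\<close>. A block of \<open>m\<close> letters then sums to \<open>lprod u\<close>, and \<open>block\<close> and
  \<open>coblock\<close> are the triangle inequalities this forces.\<close>

locale katetov_blocks = katetov_data +
  fixes m :: nat
  assumes m_neq_1: "m \<noteq> 1"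
    and block: "0 < m \<Longrightarrow> set u \<subseteq> A \<Longrightarrow> length u = m \<Longrightarrow> p (lprod u) \<le> weight u \<or> M \<le> weight u"
    and coblock: "0 < m \<Longrightarrow> set u \<subseteq> A \<Longrightarrow> length u = m - 1 \<Longrightarrow> a \<in> A \<Longrightarrow>
      f a \<le> p (a \<otimes> lprod u) + weight u"
begin

lemma block_multiple:
  assumes "set w \<subseteq> A" "m dvd length w" "x \<in> carrier G"
  shows "p (x \<otimes> lprod w) \<le> p x + weight w \<or> M \<le> weight w"
proof (cases "m = 0")
  case True
  then show ?thesis using assms by simp
next
  case False
  obtain n where "length w = m * n" using assms(2) by blast
  with assms(1) show ?thesis
  proof (induction n arbitrary: w)
    case 0
    then show ?case using assms(3) by simp
  next
    case (Suc n)
    define u v where "u = take m w" and "v = drop m w"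
    have w: "w = u @ v" "set u \<subseteq> A" "set v \<subseteq> A" "length u = m" "length v = m * n"
      using Suc.prems by (auto simp: u_def v_def dest: in_set_takeD in_set_dropD)
    then have B: "p (lprod u) \<le> weight u \<or> M \<le> weight u" using block False by blast
    have IH: "p (x \<otimes> lprod v) \<le> p x + weight v \<or> M \<le> weight v" using Suc.IH w by blast
    have "x \<otimes> lprod w = (x \<otimes> lprod v) \<otimes> lprod u"
      using w assms(3) lprod_closed by (simp add: lprod_append m_ac)
    then have "p (x \<otimes> lprod w) \<le> p (x \<otimes> lprod v) + p (lprod u)"
      using w assms(3) lprod_closed p_mult by simp
    then show ?case using B IH w weight_nonneg[of u] weight_nonneg[of v] by fastforce
  qed
qed

lemma block_multiple_value:
  "set w \<subseteq> A \<Longrightarrow> m dvd length w \<Longrightarrow> p (lprod w) \<le> weight w \<or> M \<le> weight w"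
  using block_multiple[of w \<one>] lprod_closed by simp

lemma katetov_upper_word:
  assumes u: "set u \<subseteq> A" and dvd: "int m dvd int (length u) - 1" and a: "a \<in> A"
  shows "f a \<le> p (a \<otimes> inv (lprod u)) + weight u"
proof (cases u)
  case Nil
  then show ?thesis using dvd m_neq_1 by simp
next
  case (Cons b u')
  have b: "b \<in> A" "set u' \<subseteq> A" using u Cons by auto
  have "m dvd length u'" using dvd Cons by simp
  have c: "a \<otimes> inv (lprod u) \<in> carrier G" "lprod u' \<in> carrier G" "a \<in> carrier G" "b \<in> carrier G"
    using a b u lprod_closed A_subset by auto
  have "a \<otimes> inv (lprod u) \<otimes> lprod u' = a \<otimes> inv b"
    using Cons c by (simp add: inv_mult m_assoc)
  then have "p (a \<otimes> inv b) \<le> p (a \<otimes> inv (lprod u)) + weight u' \<or> M \<le> weight u'"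
    using block_multiple[OF b(2) \<open>m dvd length u'\<close> c(1)] by simp
  moreover have "f a \<le> p (a \<otimes> inv b) + f b" using katetov_upper a b by blast
  ultimately show ?thesis
    using Cons f_le_M[OF a] f_nonneg[OF b(1)] p_nonneg[OF c(1)] by auto
qed

lemma katetov_lower_word:
  assumes v: "set v \<subseteq> A" and dvd: "int m dvd int (length v) + 1" and a: "a \<in> A"
  shows "f a \<le> p (a \<otimes> lprod v) + weight v"
proof -
  have "m \<noteq> 0" using dvd by (intro notI) simp
  define v1 v2 where "v1 = take (m - 1) v" and "v2 = drop (m - 1) v"
  have "int m \<le> int (length v) + 1" using dvd by (simp add: zdvd_imp_le)
  then have w: "v = v1 @ v2" "set v1 \<subseteq> A" "set v2 \<subseteq> A" "length v1 = m - 1"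
    "int (length v2) = int (length v) + 1 - int m"
    using v \<open>m \<noteq> 0\<close> by (auto simp: v1_def v2_def dest: in_set_takeD in_set_dropD)
  have "m dvd length v2"
  proof -
    have "int m dvd (int (length v) + 1) - int m" using dvd by (rule dvd_diff) simp
    then show ?thesis using w(5) by (metis int_dvd_int_iff)
  qed
  have c: "a \<in> carrier G" "lprod v \<in> carrier G" "lprod v1 \<in> carrier G" "lprod v2 \<in> carrier G"
    using a v w lprod_closed A_subset by auto
  have "inv (a \<otimes> lprod v) \<otimes> lprod v2 = inv (a \<otimes> lprod v1)"
    using w c by (simp add: lprod_append inv_mult m_assoc)
  then have "p (a \<otimes> lprod v1) \<le> p (a \<otimes> lprod v) + weight v2 \<or> M \<le> weight v2"
    using block_multiple[OF w(3) \<open>m dvd length v2\<close>, of "inv (a \<otimes> lprod v)"] c by (simp add: p_inv)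
  moreover have "f a \<le> p (a \<otimes> lprod v1) + weight v1"
    using coblock \<open>m \<noteq> 0\<close> w a by blast
  ultimately show ?thesis
    using w f_le_M[OF a] weight_nonneg[OF w(2)] p_nonneg[of "a \<otimes> lprod v"] c by auto
qed

lemma word_value_bound:
  assumes "set u \<subseteq> A" "set v \<subseteq> A" "int m dvd int (length u) - int (length v)"
  shows "p (lprod u \<otimes> inv (lprod v)) \<le> weight u + weight v \<or> M \<le> weight u + weight v"
  using assms
proof (induction u arbitrary: v)
  case Nil
  then have "p (lprod v) \<le> weight v \<or> M \<le> weight v"
    using block_multiple_value by simp
  then show ?case using Nil lprod_closed by (simp add: p_inv)
next
  case (Cons x u)
  show ?case
  proof (cases v)
    case Nil
    then have "int m dvd int (length (x # u))" using Cons.prems(3) by (simp only: list.size(3) of_nat_0 diff_0_right)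
    then have "m dvd length (x # u)" by (simp only: int_dvd_int_iff)
    then show ?thesis
      using Nil Cons.prems(1) block_multiple_value[of "x # u"] lprod_closed[of "x # u"] by simp
  next
    case (Cons y v')
    have xy: "x \<in> A" "y \<in> A" "set u \<subseteq> A" "set v' \<subseteq> A" using Cons Cons.prems(1,2) by auto
    have c: "x \<in> carrier G" "y \<in> carrier G" "lprod u \<in> carrier G" "lprod v' \<in> carrier G"
      using xy A_subset lprod_closed by auto
    have "lprod (x # u) \<otimes> inv (lprod v) = (x \<otimes> inv y) \<otimes> (lprod u \<otimes> inv (lprod v'))"
      using Cons c by (simp add: inv_mult m_ac)
    then have "p (lprod (x # u) \<otimes> inv (lprod v)) \<le> (f x + f y) + p (lprod u \<otimes> inv (lprod v'))"
      using c p_mult[of "x \<otimes> inv y" "lprod u \<otimes> inv (lprod v')"] katetov_lower[OF xy(1,2)] by simp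
    moreover have "p (lprod u \<otimes> inv (lprod v')) \<le> weight u + weight v' \<or> M \<le> weight u + weight v'"
      using Cons.IH xy Cons.prems(3) Cons by simp
    moreover have "weight (x # u) + weight v = f x + f y + (weight u + weight v')" using Cons by simp
    ultimately show ?thesis using f_nonneg xy by (smt (verit))
  qed
qed

lemma word_katetov_bound:
  assumes "set u \<subseteq> A" "set v \<subseteq> A" "int m dvd int (length u) - int (length v) - 1" "a \<in> A"
  shows "f a \<le> p (a \<otimes> lprod v \<otimes> inv (lprod u)) + weight u + weight v"
  using assms
proof (induction u arbitrary: v)
  case Nil
  have "int (length v) + 1 = - (int (length []) - int (length v) - 1)" by simp
  then have "int m dvd int (length v) + 1" using Nil.prems(3) by (metis dvd_minus_iff)
  then show ?case using Nil.prems katetov_lower_word[of v a] lprod_closed[of v] A_subset by auto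
next
  case (Cons x u)
  have aG: "a \<in> carrier G" using Cons.prems(4) A_subset by auto
  show ?case
  proof (cases v)
    case Nil
    then show ?thesis
      using Cons.prems katetov_upper_word[of "x # u" a] aG by simp
  next
    case (Cons y v')
    have xy: "x \<in> A" "y \<in> A" "set u \<subseteq> A" "set v' \<subseteq> A" using Cons Cons.prems(1,2) by auto
    have c: "x \<in> carrier G" "y \<in> carrier G" "lprod u \<in> carrier G" "lprod v' \<in> carrier G"
      using xy A_subset lprod_closed by auto
    have "a \<otimes> lprod v \<otimes> inv (lprod (x # u)) = (a \<otimes> lprod v' \<otimes> inv (lprod u)) \<otimes> (y \<otimes> inv x)"
      using Cons c aG by (simp add: inv_mult m_ac)
    then have "p (a \<otimes> lprod v' \<otimes> inv (lprod u)) \<le> p (a \<otimes> lprod v \<otimes> inv (lprod (x # u))) + p (y \<otimes> inv x)"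
      using c aG p_le_p_mult by simp
    moreover have "p (y \<otimes> inv x) \<le> f y + f x" using katetov_lower xy by blast
    moreover have "f a \<le> p (a \<otimes> lprod v' \<otimes> inv (lprod u)) + weight u + weight v'"
      using Cons.IH xy Cons.prems(3,4) Cons by simp
    ultimately show ?thesis using Cons by simp
  qed
qed

text \<open>Read \<open>(g, k)\<close> as \<open>g + k b\<close>, a letter \<open>a\<close> of \<open>u\<close> as \<open>a - b\<close> and a letter \<open>a\<close> of \<open>v\<close> as
  \<open>b - a\<close>. Subtracting all letters moves \<open>(g, k)\<close> to \<open>g + \<Sum>v - \<Sum>u\<close>, a point of \<open>G\<close> when \<open>m\<close>
  divides \<open>|u| - |v| + k\<close>; the cost adds the values \<open>f a\<close> of the letters.\<close>

definition word_costs :: "'a \<Rightarrow> int \<Rightarrow> real set" where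
  "word_costs g k = {p (g \<otimes> lprod v \<otimes> inv (lprod u)) + weight u + weight v | u v.
     set u \<subseteq> A \<and> set v \<subseteq> A \<and> int m dvd int (length u) - int (length v) + k}"

definition word_value :: "'a \<times> int \<Rightarrow> real" where
  "word_value x = min M (Inf (word_costs (fst x) (snd x)))"

lemma word_costs_nonempty: "word_costs g k \<noteq> {}"
proof -
  obtain a where a: "a \<in> A" using A_nonempty by blast
  define u v where "u = replicate (nat (- k)) a" and "v = replicate (nat k) a"
  have "set u \<subseteq> A" "set v \<subseteq> A" "int (length u) - int (length v) + k = 0"
    using a by (auto simp: u_def v_def)
  then show ?thesis unfolding word_costs_def by fastforce
qed

lemma word_costs_nonneg: "g \<in> carrier G \<Longrightarrow> s \<in> word_costs g k \<Longrightarrow> 0 \<le> s"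
  unfolding word_costs_def using p_nonneg weight_nonneg lprod_closed by fastforce

lemma bdd_below_word_costs: "g \<in> carrier G \<Longrightarrow> bdd_below (word_costs g k)"
  using word_costs_nonneg by (meson bdd_below.I)

lemma word_costs_mod: "word_costs g (k mod int m) = word_costs g k"
proof -
  have "int m dvd s + k mod int m \<longleftrightarrow> int m dvd s + k" for s
    by (simp add: dvd_eq_mod_eq_0 mod_add_right_eq)
  then show ?thesis unfolding word_costs_def by simp
qed

lemma word_costs_inv_subset:
  assumes g: "g \<in> carrier G" shows "word_costs g k \<subseteq> word_costs (inv g) (- k)"
proof
  fix s assume "s \<in> word_costs g k"
  then obtain u v where uv: "set u \<subseteq> A" "set v \<subseteq> A" "int m dvd int (length u) - int (length v) + k"
    and s: "s = p (g \<otimes> lprod v \<otimes> inv (lprod u)) + weight u + weight v"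
    unfolding word_costs_def by blast
  have c: "lprod u \<in> carrier G" "lprod v \<in> carrier G" using uv lprod_closed by auto
  have "inv g \<otimes> lprod u \<otimes> inv (lprod v) = inv (g \<otimes> lprod v \<otimes> inv (lprod u))"
    using g c by (simp add: inv_mult m_ac)
  then have "s = p (inv g \<otimes> lprod u \<otimes> inv (lprod v)) + weight v + weight u"
    using s g c by (simp add: p_inv)
  moreover have "int m dvd int (length v) - int (length u) + - k"
    using uv(3) by (metis dvd_minus_iff minus_diff_eq minus_add_distrib)
  ultimately show "s \<in> word_costs (inv g) (- k)"
    unfolding word_costs_def using uv by blast
qed

lemma word_costs_inv: "g \<in> carrier G \<Longrightarrow> word_costs (inv g) (- k) = word_costs g k"
  using word_costs_inv_subset[of g k] word_costs_inv_subset[of "inv g" "- k"] by simp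

lemma word_costs_mult:
  assumes g: "g \<in> carrier G" and h: "h \<in> carrier G"
    and s: "s \<in> word_costs g k" and t: "t \<in> word_costs h l"
  shows "\<exists>c\<in>word_costs (g \<otimes> h) (k + l). c \<le> s + t"
proof -
  obtain u v where uv: "set u \<subseteq> A" "set v \<subseteq> A" "int m dvd int (length u) - int (length v) + k"
    and s: "s = p (g \<otimes> lprod v \<otimes> inv (lprod u)) + weight u + weight v"
    using s unfolding word_costs_def by blast
  obtain u' v' where uv': "set u' \<subseteq> A" "set v' \<subseteq> A" "int m dvd int (length u') - int (length v') + l"
    and t: "t = p (h \<otimes> lprod v' \<otimes> inv (lprod u')) + weight u' + weight v'"
    using t unfolding word_costs_def by blast
  have c: "lprod u \<in> carrier G" "lprod v \<in> carrier G" "lprod u' \<in> carrier G" "lprod v' \<in> carrier G"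
    using uv uv' lprod_closed by auto
  have "g \<otimes> h \<otimes> lprod (v @ v') \<otimes> inv (lprod (u @ u'))
      = (g \<otimes> lprod v \<otimes> inv (lprod u)) \<otimes> (h \<otimes> lprod v' \<otimes> inv (lprod u'))"
    using uv uv' c g h by (simp add: lprod_append inv_mult m_ac)
  then have "p (g \<otimes> h \<otimes> lprod (v @ v') \<otimes> inv (lprod (u @ u')))
      \<le> p (g \<otimes> lprod v \<otimes> inv (lprod u)) + p (h \<otimes> lprod v' \<otimes> inv (lprod u'))"
    using c g h p_mult by simp
  then have "p (g \<otimes> h \<otimes> lprod (v @ v') \<otimes> inv (lprod (u @ u'))) + weight (u @ u') + weight (v @ v')
      \<le> s + t"
    by (simp add: s t)
  moreover have "int m dvd int (length (u @ u')) - int (length (v @ v')) + (k + l)"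
    using dvd_add[OF uv(3) uv'(3)] by (simp add: algebra_simps)
  then have "p (g \<otimes> h \<otimes> lprod (v @ v') \<otimes> inv (lprod (u @ u'))) + weight (u @ u') + weight (v @ v')
      \<in> word_costs (g \<otimes> h) (k + l)"
    unfolding word_costs_def using uv uv' by (intro CollectI exI[of _ "u @ u'"] exI[of _ "v @ v'"]) auto
  ultimately show ?thesis by blast
qed

lemma word_value_le_M: "word_value x \<le> M"
  by (simp add: word_value_def)

lemma word_value_nonneg: "g \<in> carrier G \<Longrightarrow> 0 \<le> word_value (g, k)"
  using word_costs_nonneg word_costs_nonempty M_nonneg
  by (simp add: word_value_def cInf_greatest)

lemma word_value_base:
  assumes g: "g \<in> carrier G" shows "word_value (g, 0) = p g"
proof -
  have "p g \<in> word_costs g 0"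
    unfolding word_costs_def using g by (intro CollectI exI[of _ "[]"]) simp
  then have "Inf (word_costs g 0) \<le> p g" using bdd_below_word_costs[OF g] by (rule cInf_lower)
  moreover have "p g \<le> Inf (word_costs g 0)"
  proof (rule cInf_greatest[OF word_costs_nonempty])
    fix s assume "s \<in> word_costs g 0"
    then obtain u v where uv: "set u \<subseteq> A" "set v \<subseteq> A" "int m dvd int (length u) - int (length v)"
      and s: "s = p (g \<otimes> lprod v \<otimes> inv (lprod u)) + weight u + weight v"
      unfolding word_costs_def by auto
    have c: "lprod u \<in> carrier G" "lprod v \<in> carrier G" using uv lprod_closed by auto
    have "p g \<le> p (g \<otimes> lprod v \<otimes> inv (lprod u)) + p (lprod u \<otimes> inv (lprod v))"
      using g c p_le_p_mult[of g "lprod v \<otimes> inv (lprod u)"] p_div_commute[of "lprod v" "lprod u"]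
      by (simp add: m_assoc)
    moreover have "p (lprod u \<otimes> inv (lprod v)) \<le> weight u + weight v \<or> M \<le> weight u + weight v"
      using word_value_bound uv by blast
    ultimately show "p g \<le> s"
      using s p_le_M[OF g] p_nonneg[of "g \<otimes> lprod v \<otimes> inv (lprod u)"] g c by auto
  qed
  ultimately show ?thesis using p_le_M[OF g] by (simp add: word_value_def)
qed

lemma word_value_generator:
  assumes a: "a \<in> A" shows "word_value (a, (- 1) mod int m) = f a"
proof -
  have aG: "a \<in> carrier G" using a A_subset by auto
  have "f a \<in> word_costs a (- 1)"
    unfolding word_costs_def using a aG by (intro CollectI exI[of _ "[a]"] exI[of _ "[]"]) simp
  then have "Inf (word_costs a (- 1)) \<le> f a" using bdd_below_word_costs[OF aG] by (rule cInf_lower)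
  moreover have "f a \<le> Inf (word_costs a (- 1))"
  proof (rule cInf_greatest[OF word_costs_nonempty])
    fix s assume "s \<in> word_costs a (- 1)"
    then show "f a \<le> s"
      unfolding word_costs_def using word_katetov_bound a by (auto simp: add_ac)
  qed
  ultimately show ?thesis using f_le_M[OF a] by (simp add: word_value_def word_costs_mod)
qed

lemma pseudo_valued_group_word_value: "pseudo_valued_group (zmod_prod G m) word_value"
proof -
  interpret P: comm_group "zmod_prod G m" by (rule comm_group_zmod_prod[OF comm_group_axioms])
  show ?thesis
  proof unfold_locales
    fix x assume "x \<in> carrier (zmod_prod G m)"
    then obtain g k where x: "x = (g, k)" "g \<in> carrier G" "k \<in> carrier (integer_mod_group m)"
      by auto
    then show "0 \<le> word_value x" by (simp add: word_value_nonneg)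
    show "word_value (inv\<^bsub>zmod_prod G m\<^esub> x) = word_value x"
      using x by (simp add: word_value_def word_costs_mod word_costs_inv)
    fix y assume "y \<in> carrier (zmod_prod G m)"
    then obtain h l where y: "y = (h, l)" "h \<in> carrier G" by auto
    have "Inf (word_costs (g \<otimes> h) (k + l)) \<le> Inf (word_costs g k) + Inf (word_costs h l)"
      using word_costs_mult x y
      by (intro cInf_le_add_cInf word_costs_nonempty bdd_below_word_costs) auto
    moreover have "0 \<le> Inf (word_costs g k)" "0 \<le> Inf (word_costs h l)"
      using x y word_costs_nonneg word_costs_nonempty by (auto intro: cInf_greatest)
    ultimately show "word_value (x \<otimes>\<^bsub>zmod_prod G m\<^esub> y) \<le> word_value x + word_value y"
      using x y M_nonneg by (simp add: word_value_def word_costs_mod)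
  qed (simp add: word_value_base)
qed

lemma finite_word_costs_le:
  assumes "finite A" "0 < d" "\<And>a. a \<in> A \<Longrightarrow> d \<le> f a" "g \<in> carrier G"
  shows "finite {s \<in> word_costs g k. s \<le> M}"
proof -
  define L where "L = {xs. set xs \<subseteq> A \<and> length xs \<le> nat \<lceil>M / d\<rceil>}"
  have short: "u \<in> L" if "set u \<subseteq> A" "weight u \<le> M" for u
  proof -
    have "real (length u) * d \<le> M" using weight_ge_length[OF assms(3) that(1)] that(2) by linarith
    then have "real (length u) \<le> M / d" using assms(2) by (simp add: field_simps)
    then have "length u \<le> nat \<lceil>M / d\<rceil>" by linarith
    then show ?thesis using that(1) unfolding L_def by simp
  qed
  have "{s \<in> word_costs g k. s \<le> M}
      \<subseteq> (\<lambda>(u, v). p (g \<otimes> lprod v \<otimes> inv (lprod u)) + weight u + weight v) ` (L \<times> L)"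
  proof
    fix s assume "s \<in> {s \<in> word_costs g k. s \<le> M}"
    then obtain u v where uv: "set u \<subseteq> A" "set v \<subseteq> A" "s \<le> M"
      and s: "s = p (g \<otimes> lprod v \<otimes> inv (lprod u)) + weight u + weight v"
      unfolding word_costs_def by auto
    have "0 \<le> p (g \<otimes> lprod v \<otimes> inv (lprod u))"
      using assms(4) uv lprod_closed by (intro p_nonneg) auto
    then have "u \<in> L" "v \<in> L"
      using short uv s weight_nonneg[OF uv(1)] weight_nonneg[OF uv(2)] by auto
    then show "s \<in> (\<lambda>(u, v). p (g \<otimes> lprod v \<otimes> inv (lprod u)) + weight u + weight v) ` (L \<times> L)"
      using s by force
  qed
  moreover have "finite L" unfolding L_def using assms(1) by (rule finite_lists_length_le)
  ultimately show ?thesis by (meson finite_SigmaI finite_imageI finite_subset)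
qed

lemma word_value_in_add_closed:
  fixes Q :: "real set"
  assumes "finite A" "0 < d" "\<And>a. a \<in> A \<Longrightarrow> d \<le> f a"
    and Q0: "0 \<in> Q" and Q_add: "\<forall>x\<in>Q \<inter> {0..}. \<forall>y\<in>Q \<inter> {0..}. x + y \<in> Q"
    and "p ` carrier G \<subseteq> Q" "f ` A \<subseteq> Q" "M \<in> Q" and g: "g \<in> carrier G"
  shows "word_value (g, k) \<in> Q"
proof -
  have "s \<in> Q" if "s \<in> word_costs g k" for s
  proof -
    obtain u v where uv: "set u \<subseteq> A" "set v \<subseteq> A"
      and s: "s = sum_list [p (g \<otimes> lprod v \<otimes> inv (lprod u)), weight u, weight v]"
      using \<open>s \<in> word_costs g k\<close> unfolding word_costs_def by auto
    have weight: "weight w \<in> Q \<inter> {0..}" if "set w \<subseteq> A" for w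
      using that assms(7) f_nonneg by (intro sum_list_in_add_closed[OF Q0 Q_add]) auto
    have "p (g \<otimes> lprod v \<otimes> inv (lprod u)) \<in> Q \<inter> {0..}"
      using uv g assms(6) lprod_closed p_nonneg by auto
    then show "s \<in> Q" unfolding s
      using weight uv by (intro sum_list_in_add_closed[OF Q0 Q_add, THEN IntD1]) auto
  qed
  moreover have "min M (Inf (word_costs g k)) \<in> insert M (word_costs g k)"
    by (rule min_cInf_mem[OF word_costs_nonempty bdd_below_word_costs[OF g]
          finite_word_costs_le[OF assms(1-3) g]])
  ultimately show ?thesis using \<open>M \<in> Q\<close> by (auto simp: word_value_def)
qed

end

section \<open>The block conditions\<close>

context katetov_data
begin

lemma katetov_blocks_0: "katetov_blocks G p A f M 0"
  by unfold_locales simp_all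

lemma katetov_blocks_of_nary:
  assumes "2 \<le> n"
    and nary: "\<And>u b. set u \<subseteq> A \<Longrightarrow> length u = n - 1 \<Longrightarrow> b \<in> A \<Longrightarrow>
      \<bar>p (lprod u \<otimes> b) - f b\<bar> \<le> weight u"
  shows "katetov_blocks G p A f M n"
proof unfold_locales
  show "n \<noteq> 1" using assms(1) by simp
next
  fix u assume u: "set u \<subseteq> A" "length u = n"
  then obtain u' b where u': "u = u' @ [b]" using assms(1)
    by (metis append_butlast_last_id le_zero_eq list.size(3) zero_neq_numeral)
  then have "set u' \<subseteq> A" "b \<in> A" "length u' = n - 1" using u by auto
  then have "p (lprod u' \<otimes> b) \<le> f b + weight u'" using nary by fastforce
  moreover have "b \<in> carrier G" using \<open>b \<in> A\<close> A_subset by auto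
  ultimately show "p (lprod u) \<le> weight u \<or> M \<le> weight u"
    using u u' by (simp add: lprod_append)
next
  fix u a assume u: "set u \<subseteq> A" "length u = n - 1" and a: "a \<in> A"
  have "lprod u \<otimes> a = a \<otimes> lprod u" using u a A_subset lprod_closed by (auto intro: m_comm)
  then show "f a \<le> p (a \<otimes> lprod u) + weight u" using nary[OF u a] by simp
qed

lemma nary_katetov_2:
  assumes exponent: "\<forall>x\<in>carrier G. x [^] (2::nat) = \<one>"
    and u: "set u \<subseteq> A" "length u = 1" and b: "b \<in> A"
  shows "\<bar>p (lprod u \<otimes> b) - f b\<bar> \<le> weight u"
proof -
  obtain x where x: "u = [x]" "x \<in> A" using u by (metis length_Suc_conv length_0_conv list.set_intros(1) subsetD One_nat_def)
  have c: "x \<in> carrier G" "b \<in> carrier G" using x b A_subset by auto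
  have "inv b = b" using exponent c by (simp add: numeral_2_eq_2 inv_equality)
  then have "lprod u \<otimes> b = x \<otimes> inv b" using x c by simp
  moreover have "p (b \<otimes> inv x) = p (x \<otimes> inv b)" using c p_div_commute by simp
  ultimately show ?thesis
    using katetov_lower[OF x(2) b] katetov_upper[OF b x(2)] x by simp
qed

lemma lprod_eq_finprod: "set u \<subseteq> A \<Longrightarrow> lprod u = finprod G (\<lambda>k. u ! (k - 1)) {1..length u}"
proof (induction u rule: rev_induct)
  case (snoc x u)
  have u: "set u \<subseteq> A" "x \<in> carrier G" "set u \<subseteq> carrier G" using snoc.prems A_subset by auto
  have "{1..length (u @ [x])} = insert (Suc (length u)) {1..length u}" by auto
  moreover have "(\<lambda>k. (u @ [x]) ! (k - 1)) \<in> {1..length u} \<rightarrow> carrier G"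
    using u nth_mem by (fastforce simp: nth_append)
  ultimately have "finprod G (\<lambda>k. (u @ [x]) ! (k - 1)) {1..length (u @ [x])}
      = x \<otimes> finprod G (\<lambda>k. (u @ [x]) ! (k - 1)) {1..length u}"
    using u by (simp add: finprod_insert)
  also have "finprod G (\<lambda>k. (u @ [x]) ! (k - 1)) {1..length u} = finprod G (\<lambda>k. u ! (k - 1)) {1..length u}"
    using u by (intro finprod_cong') (auto simp: nth_append Pi_def)
  finally have "finprod G (\<lambda>k. (u @ [x]) ! (k - 1)) {1..length (u @ [x])} = x \<otimes> lprod u"
    using snoc.IH[OF u(1)] by simp
  then show ?case using u snoc.prems lprod_closed[OF u(1)] by (simp add: lprod_append m_comm)
qed simp

lemma weight_eq_sum: "weight u = (\<Sum>k=1..length u. f (u ! (k - 1)))"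
proof (induction u rule: rev_induct)
  case (snoc x u)
  have "(\<Sum>k=1..length u. f ((u @ [x]) ! (k - 1))) = (\<Sum>k=1..length u. f (u ! (k - 1)))"
    by (rule sum.cong) (auto simp: nth_append)
  then show ?case using snoc by simp
qed simp

lemma nary_katetov_of_finprod:
  assumes cond: "\<forall>a. (\<forall>k\<in>{1..N}. a k \<in> A) \<longrightarrow>
      \<bar>p (finprod G a {1..N}) - f (a N)\<bar> \<le> (\<Sum>k=1..N-1. f (a k))"
    and N: "0 < N" and u: "set u \<subseteq> A" "length u = N - 1" and b: "b \<in> A"
  shows "\<bar>p (lprod u \<otimes> b) - f b\<bar> \<le> weight u"
proof -
  define a where "a = (\<lambda>k. (u @ [b]) ! (k - 1))"
  have len: "length (u @ [b]) = N" using u N by simp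
  have "\<forall>k\<in>{1..N}. a k \<in> A"
    using u b len by (auto simp: a_def nth_append dest!: nth_mem[of _ u])
  moreover have "finprod G a {1..N} = lprod u \<otimes> b"
    using lprod_eq_finprod[of "u @ [b]"] u b len A_subset lprod_closed[OF u(1)]
    by (auto simp: a_def lprod_append)
  moreover have "(\<Sum>k=1..N-1. f (a k)) = weight u"
    using u by (auto simp: weight_eq_sum a_def nth_append intro!: sum.cong)
  moreover have "a N = b" using u(2) N by (simp add: a_def nth_append)
  ultimately show ?thesis using cond by metis
qed

lemma katetov_blocks_of_exponent:
  assumes N: "N \<noteq> 1" and exponent: "N \<noteq> 0 \<Longrightarrow> \<forall>x\<in>carrier G. x [^] N = \<one>"
    and cond: "N > 2 \<Longrightarrow> \<forall>a. (\<forall>k\<in>{1..N}. a k \<in> A) \<longrightarrow>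
      \<bar>p (finprod G a {1..N}) - f (a N)\<bar> \<le> (\<Sum>k=1..N-1. f (a k))"
  shows "katetov_blocks G p A f M N"
proof -
  consider "N = 0" | "N = 2" | "N > 2" using N by linarith
  then show ?thesis
  proof cases
    case 1
    then show ?thesis using katetov_blocks_0 by simp
  next
    case 2
    then show ?thesis
      using exponent by (intro katetov_blocks_of_nary) (auto intro: nary_katetov_2)
  next
    case 3
    then show ?thesis
      using cond nary_katetov_of_finprod[of N] by (intro katetov_blocks_of_nary) auto
  qed
qed

lemma katetov_blocks_of_heavy:
  assumes d: "0 < d" "\<And>a. a \<in> A \<Longrightarrow> d \<le> f a" and m: "2 \<le> m" "M \<le> real (m - 1) * d"
  shows "katetov_blocks G p A f M m"
proof unfold_locales
  show "m \<noteq> 1" using m by simp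
next
  fix u assume u: "set u \<subseteq> A" "length u = m"
  have "real (m - 1) * d \<le> real m * d" using d(1) by (intro mult_right_mono) auto
  then show "p (lprod u) \<le> weight u \<or> M \<le> weight u"
    using weight_ge_length[OF d(2) u(1)] u(2) m by auto
next
  fix u a assume u: "set u \<subseteq> A" "length u = m - 1" and a: "a \<in> A"
  have "0 \<le> p (a \<otimes> lprod u)" using u a A_subset lprod_closed[OF u(1)] by (intro p_nonneg) auto
  then show "f a \<le> p (a \<otimes> lprod u) + weight u"
    using weight_ge_length[OF d(2) u(1)] u(2) m f_le_M[OF a] by auto
qed

end

definition trivializing_enlargement ::
  "ereal \<Rightarrow> nat \<Rightarrow> 'a monoid \<Rightarrow> ('a \<Rightarrow> real) \<Rightarrow> 'a set \<Rightarrow> ('a \<Rightarrow> real) \<Rightarrow>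
    ('a + real) monoid \<Rightarrow> ('a + real \<Rightarrow> real) \<Rightarrow> bool"
where
  "trivializing_enlargement r N G p A f H q \<longleftrightarrow>
     in_class_G r N H q \<and> bounded_value H q \<and> enlarges H q G p \<and>
     (\<exists>b\<in>carrier H. \<forall>a\<in>A. f a = q (Inl a \<otimes>\<^bsub>H\<^esub> inv\<^bsub>H\<^esub> b))"

lemma (in katetov_blocks) trivializing_enlargement_exists:
  assumes sep: "vseparable G p" and Mr: "ereal M \<le> r"
    and exponent: "N \<noteq> 0 \<Longrightarrow> (\<forall>x\<in>carrier G. x [^] N = \<one>) \<and> m dvd N"
  obtains H q where "trivializing_enlargement r N G p A f H q"
    "finite (carrier G) \<and> 0 < m \<longrightarrow> finite (carrier H)"
    "q ` carrier H \<subseteq> word_value ` carrier (zmod_prod G m)"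
proof -
  \<comment> \<open>the new point \<open>b\<close>\<close>
  define y where "y = (\<one>, 1 mod int m)"
  have y: "y \<in> carrier (zmod_prod G m)"
    by (simp add: y_def mod_in_carrier_integer_mod_group)
  have "(a, 0) \<otimes>\<^bsub>zmod_prod G m\<^esub> inv\<^bsub>zmod_prod G m\<^esub> y = (a, (- 1) mod int m)" if "a \<in> carrier G" for a
    using that by (simp add: y_def mod_in_carrier_integer_mod_group mod_minus_eq)
  then have trivial: "word_value ((a, 0) \<otimes>\<^bsub>zmod_prod G m\<^esub> inv\<^bsub>zmod_prod G m\<^esub> y) = f a" if "a \<in> A" for a
    using that A_subset word_value_generator by auto
  show ?thesis
  proof (rule enlargement_from_pseudo_value[OF valued_group_axioms pseudo_valued_group_word_value
        word_value_base word_value_le_M Mr sep exponent y])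
    fix H :: "('a + real) monoid" and q
    assume H: "in_class_G r N H q" "bounded_value H q" "enlarges H q G p"
      "\<exists>b\<in>carrier H. \<forall>a\<in>carrier G.
         q (Inl a \<otimes>\<^bsub>H\<^esub> inv\<^bsub>H\<^esub> b) = word_value ((a, 0) \<otimes>\<^bsub>zmod_prod G m\<^esub> inv\<^bsub>zmod_prod G m\<^esub> y)"
      "finite (carrier G) \<Longrightarrow> 0 < m \<Longrightarrow> finite (carrier H)"
      "q ` carrier H \<subseteq> word_value ` carrier (zmod_prod G m)"
    then have "trivializing_enlargement r N G p A f H q"
      unfolding trivializing_enlargement_def using trivial A_subset by (metis subsetD)
    moreover have "finite (carrier G) \<and> 0 < m \<longrightarrow> finite (carrier H)" using H(5) by blast
    ultimately show thesis using H(6) by (rule that)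
  qed
qed

lemma (in valued_group) pseudo_valued_group_fst: "pseudo_valued_group (zmod_prod G m) (\<lambda>x. p (fst x))"
proof -
  interpret P: comm_group "zmod_prod G m" by (rule comm_group_zmod_prod[OF comm_group_axioms])
  show ?thesis
    by unfold_locales (auto simp: p_nonneg p_inv p_mult)
qed

lemma (in valued_group) trivializing_enlargement_of_base_point:
  assumes sep: "vseparable G p" and M: "\<And>x. x \<in> carrier G \<Longrightarrow> p x \<le> M" and Mr: "ereal M \<le> r"
    and exponent: "N \<noteq> 0 \<Longrightarrow> \<forall>x\<in>carrier G. x [^] N = \<one>"
    and b: "b \<in> carrier G" and A: "A \<subseteq> carrier G" and f: "\<And>a. a \<in> A \<Longrightarrow> f a = p (a \<otimes> inv b)"
  obtains H q where "trivializing_enlargement r N G p A f H q"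
    "finite (carrier G) \<longrightarrow> finite (carrier H)" "q ` carrier H \<subseteq> p ` carrier G"
proof -
  have y: "(b, 0) \<in> carrier (zmod_prod G 1)" using b by simp
  have M': "\<And>x. x \<in> carrier (zmod_prod G 1) \<Longrightarrow> p (fst x) \<le> M" using M by auto
  have exponent': "N \<noteq> 0 \<Longrightarrow> (\<forall>x\<in>carrier G. x [^] N = \<one>) \<and> 1 dvd N" using exponent by simp
  show ?thesis
  proof (rule enlargement_from_pseudo_value[OF valued_group_axioms pseudo_valued_group_fst _ M' Mr sep
        exponent' y])
    fix H :: "('a + real) monoid" and q
    assume H: "in_class_G r N H q" "bounded_value H q" "enlarges H q G p"
      "\<exists>b'\<in>carrier H. \<forall>a\<in>carrier G.
         q (Inl a \<otimes>\<^bsub>H\<^esub> inv\<^bsub>H\<^esub> b') = p (fst ((a, 0) \<otimes>\<^bsub>zmod_prod G 1\<^esub> inv\<^bsub>zmod_prod G 1\<^esub> (b, 0)))"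
      "finite (carrier G) \<Longrightarrow> 0 < (1::nat) \<Longrightarrow> finite (carrier H)"
      "q ` carrier H \<subseteq> (\<lambda>x. p (fst x)) ` carrier (zmod_prod G 1)"
    obtain b' where "b' \<in> carrier H" "\<forall>a\<in>carrier G. q (Inl a \<otimes>\<^bsub>H\<^esub> inv\<^bsub>H\<^esub> b') = p (a \<otimes> inv b)"
      using H(4) b by auto
    then have "trivializing_enlargement r N G p A f H q"
      unfolding trivializing_enlargement_def using H(1-3) A f by (metis subsetD)
    moreover have "finite (carrier G) \<longrightarrow> finite (carrier H)" using H(5) by simp
    moreover have "q ` carrier H \<subseteq> p ` carrier G" using H(6) by auto
    ultimately show thesis by (rule that)
  qed simp
qed

lemma katetov_data_of_E_r:
  fixes G :: "'a monoid" (structure)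
  assumes G: "in_class_G r N G p" "bounded_value G p"
    and A: "A \<subseteq> carrier G" "A \<noteq> {}" and f: "E_r r G p A f"
  obtains M where "katetov_data G p A f M" "ereal M \<le> r"
    "finite (carrier G) \<longrightarrow> M \<in> p ` carrier G \<union> f ` A"
proof -
  interpret valued_group G p using G(1) by (simp add: in_class_G_def valued_group_def valued_group_axioms_def)
  have katetov: "\<And>a. a \<in> A \<Longrightarrow> 0 \<le> f a"
    "\<And>a b. a \<in> A \<Longrightarrow> b \<in> A \<Longrightarrow> f a \<le> p (a \<otimes> inv b) + f b"
    "\<And>a b. a \<in> A \<Longrightarrow> b \<in> A \<Longrightarrow> p (a \<otimes> inv b) \<le> f a + f b"
    using f unfolding E_r_def katetov_on_def vdist_def by (fastforce simp: abs_le_iff)+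
  define X where "X = p ` carrier G \<union> f ` A"
  obtain B where B: "\<And>x. x \<in> carrier G \<Longrightarrow> p x \<le> B" using G(2) unfolding bounded_value_def by blast
  obtain a0 where a0: "a0 \<in> A" using A(2) by blast
  have "x \<le> B + f a0" if x: "x \<in> X" for x
  proof -
    consider g where "g \<in> carrier G" "x = p g" | a where "a \<in> A" "x = f a"
      using x by (auto simp: X_def)
    then show ?thesis
    proof cases
      case 1
      then show ?thesis using B katetov(1)[OF a0] by fastforce
    next
      case 2
      then have "a \<otimes> inv a0 \<in> carrier G" using A(1) a0 by auto
      then show ?thesis using 2 katetov(2)[OF 2(1) a0] B by fastforce
    qed
  qed
  then have bdd: "bdd_above X" by (rule bdd_aboveI)
  have X: "X \<noteq> {}" "\<forall>x\<in>X. ereal x \<le> r"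
    using G(1) f by (auto simp: X_def in_class_G_def E_r_def)
  have "katetov_data G p A f (Sup X)"
  proof unfold_locales
    fix a assume "a \<in> A"
    then show "f a \<le> Sup X" using bdd by (auto simp: X_def intro: cSup_upper)
  next
    fix x assume "x \<in> carrier G"
    then show "p x \<le> Sup X" using bdd by (auto simp: X_def intro: cSup_upper)
  qed (use A katetov in auto)
  moreover have "ereal (Sup X) \<le> r"
  proof (cases r)
    case (real r')
    then show ?thesis using X by (simp add: cSup_least)
  qed (use X in auto)
  moreover have "finite (carrier G) \<longrightarrow> Sup X \<in> X"
  proof
    assume "finite (carrier G)"
    then have "finite X" using A(1) by (simp add: X_def finite_subset)
    then show "Sup X \<in> X" using X(1) by (simp add: cSup_eq_Max)
  qed
  ultimately show ?thesis using that unfolding X_def by blast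
qed

context katetov_data
begin

lemma finite_trivializing_enlargement_exists:
  fixes Q :: "real set"
  assumes blocks: "katetov_blocks G p A f M N" and sep: "vseparable G p" and Mr: "ereal M \<le> r"
    and exponent: "N \<noteq> 0 \<Longrightarrow> \<forall>x\<in>carrier G. x [^] N = \<one>" and fin: "finite (carrier G)"
    and Q0: "0 \<in> Q" and Q_add: "\<forall>x\<in>Q \<inter> {0..}. \<forall>y\<in>Q \<inter> {0..}. x + y \<in> Q"
    and pfQ: "p ` carrier G \<union> f ` A \<subseteq> Q" and MQ: "M \<in> Q"
  shows "\<exists>H q. trivializing_enlargement r N G p A f H q \<and> finite (carrier H) \<and> q ` carrier H \<subseteq> Q"
proof (cases "\<exists>b\<in>A. f b = 0")
  case True
  then obtain b where b: "b \<in> A" "f b = 0" by blast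
  have f: "f a = p (a \<otimes> inv b)" if "a \<in> A" for a
    using katetov_upper[OF that b(1)] katetov_lower[OF that b(1)] b(2) by simp
  have "b \<in> carrier G" using b(1) A_subset by auto
  obtain H q where "trivializing_enlargement r N G p A f H q"
    "finite (carrier G) \<longrightarrow> finite (carrier H)" "q ` carrier H \<subseteq> p ` carrier G"
    by (rule trivializing_enlargement_of_base_point[OF sep p_le_M Mr exponent \<open>b \<in> carrier G\<close> A_subset f])
  then show ?thesis using fin pfQ by blast
next
  case False
  have fA: "finite A" using fin A_subset finite_subset by blast
  define d where "d = Min (f ` A)"
  have "d \<in> f ` A" unfolding d_def using fA A_nonempty by (intro Min_in) auto
  then have d: "0 < d" "\<And>a. a \<in> A \<Longrightarrow> d \<le> f a"
    using fA False f_nonneg by (auto simp: d_def less_le)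
  obtain m where m: "katetov_blocks G p A f M m" "0 < m" "N \<noteq> 0 \<Longrightarrow> m dvd N"
  proof (cases "N = 0")
    case True
    define m where "m = nat \<lceil>M / d\<rceil> + 2"
    have "M / d \<le> real (m - 1)" unfolding m_def by linarith
    then have "M \<le> real (m - 1) * d" using d(1) by (simp add: field_simps)
    moreover have "2 \<le> m" by (simp add: m_def)
    ultimately have "katetov_blocks G p A f M m" by (intro katetov_blocks_of_heavy[OF d])
    then show thesis using True \<open>2 \<le> m\<close> by (intro that) auto
  next
    case False
    then show thesis by (intro that[OF blocks]) auto
  qed
  interpret katetov_blocks G p A f M m by (rule m(1))
  have exponent': "N \<noteq> 0 \<Longrightarrow> (\<forall>x\<in>carrier G. x [^] N = \<one>) \<and> m dvd N"
    using exponent m(3) by blast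
  obtain H q where H: "trivializing_enlargement r N G p A f H q"
    "finite (carrier G) \<and> 0 < m \<longrightarrow> finite (carrier H)"
    "q ` carrier H \<subseteq> word_value ` carrier (zmod_prod G m)"
    by (rule trivializing_enlargement_exists[OF sep Mr exponent'])
  have "word_value ` carrier (zmod_prod G m) \<subseteq> Q"
    using word_value_in_add_closed[OF fA d Q0 Q_add _ _ MQ] pfQ by auto
  then show ?thesis using H fin m(2) by blast
qed

end

theorem theorem2p17:
  fixes r :: ereal and N :: nat and G :: "'a monoid" and p :: "'a \<Rightarrow> real"
    and A :: "'a set" and f :: "'a \<Rightarrow> real"
  assumes r: "r = 1 \<or> r = \<infinity>"
    and N: "N \<noteq> 1"
    and G: "in_class_G r N G p" and Gb: "bounded_value G p"
    and A: "A \<subseteq> carrier G" "A \<noteq> {}"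
    and f: "E_r r G p A f"
    and cond: "N > 2 \<Longrightarrow> (\<forall>a. (\<forall>k\<in>{1..N}. a k \<in> A) \<longrightarrow>
               \<bar>p (finprod G a {1..N}) - f (a N)\<bar> \<le> (\<Sum>k=1..N-1. f (a k)))"
  shows "(\<exists>(H :: ('a + real) monoid) q. in_class_G r N H q \<and> bounded_value H q \<and>
             enlarges H q G p \<and>
             (\<exists>b\<in>carrier H. \<forall>a\<in>A. f a = q (Inl a \<otimes>\<^bsub>H\<^esub> inv\<^bsub>H\<^esub> b)))
       \<and> (\<forall>Q :: real set.
            {0..} \<subseteq> closure (Q \<inter> {0..}) \<and> 0 \<in> Q \<and>
            (\<forall>x\<in>Q \<inter> {0..}. \<forall>y\<in>Q \<inter> {0..}. x + y \<in> Q) \<and>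
            finite (carrier G) \<and> p ` carrier G \<union> f ` A \<subseteq> Q
            \<longrightarrow> (\<exists>(H :: ('a + real) monoid) q. in_class_G r N H q \<and> bounded_value H q \<and>
                   enlarges H q G p \<and>
                   (\<exists>b\<in>carrier H. \<forall>a\<in>A. f a = q (Inl a \<otimes>\<^bsub>H\<^esub> inv\<^bsub>H\<^esub> b)) \<and>
                   finite (carrier H) \<and> q ` carrier H \<subseteq> Q))"
proof -
  obtain M where K: "katetov_data G p A f M" and Mr: "ereal M \<le> r"
    and MQ: "finite (carrier G) \<longrightarrow> M \<in> p ` carrier G \<union> f ` A"
    by (rule katetov_data_of_E_r[OF G Gb A f])
  interpret katetov_data G p A f M by (rule K)
  have sep: "vseparable G p" and exponent: "N \<noteq> 0 \<Longrightarrow> \<forall>x\<in>carrier G. x [^]\<^bsub>G\<^esub> N = \<one>\<^bsub>G\<^esub>"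
    using G by (auto simp: in_class_G_def)
  have blocks: "katetov_blocks G p A f M N"
    by (rule katetov_blocks_of_exponent[OF N exponent cond])
  have "N \<noteq> 0 \<Longrightarrow> (\<forall>x\<in>carrier G. x [^]\<^bsub>G\<^esub> N = \<one>\<^bsub>G\<^esub>) \<and> N dvd N" using exponent by simp
  then obtain H q where triv: "trivializing_enlargement r N G p A f H q"
    by (rule katetov_blocks.trivializing_enlargement_exists[OF blocks sep Mr])
  show ?thesis (is "?part1 \<and> (\<forall>Q. ?hyp Q \<longrightarrow> ?part2 Q)")
  proof (intro conjI allI impI)
    show ?part1 using triv unfolding trivializing_enlargement_def by (intro exI)
  next
    fix Q :: "real set" assume "?hyp Q"
    then have "0 \<in> Q" "\<forall>x\<in>Q \<inter> {0..}. \<forall>y\<in>Q \<inter> {0..}. x + y \<in> Q" "finite (carrier G)"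
      "p ` carrier G \<union> f ` A \<subseteq> Q" by auto
    then have "\<exists>H q. trivializing_enlargement r N G p A f H q \<and> finite (carrier H) \<and> q ` carrier H \<subseteq> Q"
      using MQ by (intro finite_trivializing_enlargement_exists[OF blocks sep Mr exponent]) auto
    then show "?part2 Q" unfolding trivializing_enlargement_def conj_assoc .
  qed
qed

end
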